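(* Let $G=(V,E)$ be a finite simple graph which is $S_{1,1,5}$-free, $K_4$-free, diamond-free and butterfly-free. Let $xy\in E$ and let $r$ be a vertex with $rx\in E$ and $ry\notin E$. For $i\ge 1$ let $N_i=\{z\in V:\operatorname{dist}_G(z,\{x,y\})=i\}$. Assume $N_2$ is an independent set, every vertex of $N_3$ has exactly one neighbor in $N_2$, and there is no triangle with one vertex in $N_3$ and two vertices in $N_4$. If $|N_2|\ge 5$ and $N_5\ne\emptyset$, then there is no induced path $(a,b,c)$ in $G[N_4\cup N_5]$ with at least one of its end-vertices $a,c$ in $N_5$.
   Context: $S_{1,1,5}$ is the tree with a center $u$ adjacent to $a$, $b$ and $z_1$, where $u,z_1,\dots,z_5$ is an induced path, and no other edges. A diamond is $K_4$ minus one edge; a butterfly consists of two disjoint edges (inducing $2K_2$) together with a vertex adjacent to all four of their endpoints. $\operatorname{dist}_G(z,\{x,y\})$ is the minimum of the distances from $z$ to $x$ and to $y$. *)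

theory Defs
  imports Main
begin

definition simple_graph :: "'a set \<Rightarrow> ('a \<Rightarrow> 'a \<Rightarrow> bool) \<Rightarrow> bool" where
  "simple_graph V E \<longleftrightarrow> finite V \<and> (\<forall>u v. E u v \<longrightarrow> u \<in> V \<and> v \<in> V)
     \<and> (\<forall>u v. E u v \<longrightarrow> E v u) \<and> (\<forall>u. \<not> E u u)"

definition contains_induced :: "'a set \<Rightarrow> ('a \<Rightarrow> 'a \<Rightarrow> bool) \<Rightarrow> nat set \<Rightarrow> (nat \<Rightarrow> nat \<Rightarrow> bool) \<Rightarrow> bool" where
  "contains_induced V E VH EH \<longleftrightarrow> (\<exists>f. inj_on f VH \<and> f ` VH \<subseteq> V \<and>
      (\<forall>u\<in>VH. \<forall>v\<in>VH. E (f u) (f v) \<longleftrightarrow> EH u v))"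

definition H_free :: "'a set \<Rightarrow> ('a \<Rightarrow> 'a \<Rightarrow> bool) \<Rightarrow> nat set \<Rightarrow> (nat \<Rightarrow> nat \<Rightarrow> bool) \<Rightarrow> bool" where
  "H_free V E VH EH \<longleftrightarrow> \<not> contains_induced V E VH EH"

definition sym_edges :: "(nat \<times> nat) set \<Rightarrow> nat \<Rightarrow> nat \<Rightarrow> bool" where
  "sym_edges S u v \<longleftrightarrow> (u, v) \<in> S \<or> (v, u) \<in> S"

(* S_{1,1,5}: centre u=0, leaves a=1, b=2, path u,z1..z5 = 0,3,4,5,6,7 *)
definition S115_V :: "nat set" where "S115_V = {0..<8}"
definition S115_E :: "nat \<Rightarrow> nat \<Rightarrow> bool" where
  "S115_E = sym_edges {(0,1),(0,2),(0,3),(3,4),(4,5),(5,6),(6,7)}"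

definition K4_V :: "nat set" where "K4_V = {0..<4}"
definition K4_E :: "nat \<Rightarrow> nat \<Rightarrow> bool" where "K4_E u v \<longleftrightarrow> u \<noteq> v"

(* diamond = K4 minus the edge {2,3} *)
definition diamond_V :: "nat set" where "diamond_V = {0..<4}"
definition diamond_E :: "nat \<Rightarrow> nat \<Rightarrow> bool" where
  "diamond_E = sym_edges {(0,1),(0,2),(0,3),(1,2),(1,3)}"

(* butterfly: edges 01 and 23 (inducing 2K2) plus vertex 4 adjacent to 0,1,2,3 *)
definition butterfly_V :: "nat set" where "butterfly_V = {0..<5}"
definition butterfly_E :: "nat \<Rightarrow> nat \<Rightarrow> bool" where
  "butterfly_E = sym_edges {(0,1),(2,3),(4,0),(4,1),(4,2),(4,3)}"

definition walk_to :: "('a \<Rightarrow> 'a \<Rightarrow> bool) \<Rightarrow> 'a \<Rightarrow> 'a set \<Rightarrow> nat \<Rightarrow> bool" where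
  "walk_to E z S n \<longleftrightarrow> (\<exists>xs. length xs = Suc n \<and> hd xs = z \<and> last xs \<in> S \<and>
      (\<forall>i<n. E (xs ! i) (xs ! Suc i)))"

definition dist_eq :: "('a \<Rightarrow> 'a \<Rightarrow> bool) \<Rightarrow> 'a \<Rightarrow> 'a set \<Rightarrow> nat \<Rightarrow> bool" where
  "dist_eq E z S i \<longleftrightarrow> walk_to E z S i \<and> (\<forall>j<i. \<not> walk_to E z S j)"

definition Nset :: "'a set \<Rightarrow> ('a \<Rightarrow> 'a \<Rightarrow> bool) \<Rightarrow> 'a \<Rightarrow> 'a \<Rightarrow> nat \<Rightarrow> 'a set" where
  "Nset V E x y i = {z \<in> V. dist_eq E z {x, y} i}"

end

theory Submission
  imports Defs
begin

(* Distances to the edge xy split G into layers N_0, N_1, ...; edges join only equal or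
   consecutive layers, so most non-edges needed for the forbidden induced subgraphs come for free.

   The heart of the proof: no u in N_4 has a neighbour t in N_5 with a further neighbour s in N_5
   not adjacent to u. Otherwise extend to an induced path v u_3 u t s with v in N_2. An S_{1,1,5}
   centred in N_1 shows that the N_1-neighbours of v see no other vertex of N_2, so each of the
   at least four other vertices of N_2 has a neighbour in N_1 not adjacent to v. A case analysis
   on how the neighbours of v attach to x and y shows that each such N_1-vertex sees only one
   vertex of N_2, so these neighbours are distinct, and that there are at most three of them.

   For an induced path a b c with a in N_5: if b is in N_4, an S_{1,1,5} centred at b with legs a
   and c and a leg descending through N_3, N_2, N_1 to x and y (or to x and r) appears; if b is
   in N_5, the heart applies to c b a or to a neighbour of b in N_4. *)

lemma card_le_card_if_private_witnesses:
  assumes "finite B"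
    and "\<And>a. a \<in> A \<Longrightarrow> \<exists>b\<in>B. R a b"
    and "\<And>a a' b. a \<in> A \<Longrightarrow> a' \<in> A \<Longrightarrow> b \<in> B \<Longrightarrow> R a b \<Longrightarrow> R a' b \<Longrightarrow> a = a'"
  shows "card A \<le> card B"
proof -
  obtain f where f: "\<And>a. a \<in> A \<Longrightarrow> f a \<in> B \<and> R a (f a)"
    using assms(2) by metis
  have "inj_on f A"
    by (rule inj_onI) (use f assms(3) in metis)
  then show ?thesis
    using f assms(1) by (intro card_inj_on_le) auto
qed

lemma card_le_2_if_no_three:
  assumes "finite A"
    and "\<And>a b c. a \<in> A \<Longrightarrow> b \<in> A \<Longrightarrow> c \<in> A \<Longrightarrow> a \<noteq> b \<Longrightarrow> a \<noteq> c \<Longrightarrow> b \<noteq> c \<Longrightarrow> False"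
  shows "card A \<le> 2"
proof (rule ccontr)
  assume "\<not> card A \<le> 2"
  then obtain T where "T \<subseteq> A" "card T = 3"
    by (metis not_less_eq_eq numeral_2_eq_2 numeral_3_eq_3 obtain_subset_with_card_n)
  then show False
    using assms(2) by (auto simp: card_3_iff)
qed

lemma contains_induced_by_list:
  assumes "distinct vs" "set vs \<subseteq> V"
    and "\<forall>i<length vs. \<forall>j<length vs. E (vs ! i) (vs ! j) \<longleftrightarrow> EH i j"
  shows "contains_induced V E {0..<length vs} EH"
  unfolding contains_induced_def
  using assms by (intro exI[of _ "(!) vs"]) (auto simp: inj_on_nth)

lemma K4_freeD:
  assumes "simple_graph V E" "H_free V E K4_V K4_E"
    and "E a b" "E a c" "E a d" "E b c" "E b d" "E c d"
  shows False
proof -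
  have "contains_induced V E {0..<length [a, b, c, d]} K4_E"
    using assms(1,3-) unfolding simple_graph_def K4_E_def
    by (intro contains_induced_by_list) (auto simp: All_less_Suc numeral_eq_Suc)
  then show False
    using assms(2) by (simp add: H_free_def K4_V_def numeral_eq_Suc)
qed

lemma diamond_freeD:
  assumes "simple_graph V E" "H_free V E diamond_V diamond_E"
    and "E a b" "E a c" "E a d" "E b c" "E b d" "\<not> E c d" "c \<noteq> d"
  shows False
proof -
  have "contains_induced V E {0..<length [a, b, c, d]} diamond_E"
    using assms(1,3-) unfolding simple_graph_def diamond_E_def sym_edges_def
    by (intro contains_induced_by_list) (auto simp: All_less_Suc numeral_eq_Suc)
  then show False
    using assms(2) by (simp add: H_free_def diamond_V_def numeral_eq_Suc)
qed

lemma butterfly_freeD: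
  assumes "simple_graph V E" "H_free V E butterfly_V butterfly_E"
    and "E a b" "E c d" "E h a" "E h b" "E h c" "E h d"
    and "\<not> E a c" "\<not> E a d" "\<not> E b c" "\<not> E b d"
  shows False
proof -
  have "contains_induced V E {0..<length [a, b, c, d, h]} butterfly_E"
    using assms(1,3-) unfolding simple_graph_def butterfly_E_def sym_edges_def
    by (intro contains_induced_by_list) (auto simp: All_less_Suc numeral_eq_Suc)
  then show False
    using assms(2) by (simp add: H_free_def butterfly_V_def numeral_eq_Suc)
qed

lemma S115_freeD:
  assumes "simple_graph V E" "H_free V E S115_V S115_E"
    and "E u a" "E u b" "E u z1" "E z1 z2" "E z2 z3" "E z3 z4" "E z4 z5" "a \<noteq> b"
    and "\<not> E a b" "\<not> E a z1" "\<not> E a z2" "\<not> E a z3" "\<not> E a z4" "\<not> E a z5"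
    and "\<not> E b z1" "\<not> E b z2" "\<not> E b z3" "\<not> E b z4" "\<not> E b z5"
    and "\<not> E u z2" "\<not> E u z3" "\<not> E u z4" "\<not> E u z5"
    and "\<not> E z1 z3" "\<not> E z1 z4" "\<not> E z1 z5" "\<not> E z2 z4" "\<not> E z2 z5" "\<not> E z3 z5"
  shows False
proof -
  have "contains_induced V E {0..<length [u, a, b, z1, z2, z3, z4, z5]} S115_E"
    using assms(1,3-) unfolding simple_graph_def S115_E_def sym_edges_def
    by (intro contains_induced_by_list) (auto simp: All_less_Suc numeral_eq_Suc)
  then show False
    using assms(2) by (simp add: H_free_def S115_V_def numeral_eq_Suc)
qed

lemma walk_to_0_iff: "walk_to E z S 0 \<longleftrightarrow> z \<in> S"
proof
  assume "walk_to E z S 0"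
  then obtain xs where "length xs = 1" "hd xs = z" "last xs \<in> S"
    unfolding walk_to_def by auto
  then show "z \<in> S" by (cases xs) auto
qed (auto simp: walk_to_def intro: exI[of _ "[z]"])

lemma walk_to_Suc: "walk_to E u S i \<Longrightarrow> E v u \<Longrightarrow> walk_to E v S (Suc i)"
  unfolding walk_to_def
proof (elim exE conjE)
  fix xs
  assume xs: "length xs = Suc i" "hd xs = u" "last xs \<in> S" "\<forall>k<i. E (xs ! k) (xs ! Suc k)"
    and "E v u"
  show "\<exists>ys. length ys = Suc (Suc i) \<and> hd ys = v \<and> last ys \<in> S \<and>
      (\<forall>k<Suc i. E (ys ! k) (ys ! Suc k))"
  proof (intro exI[of _ "v # xs"] conjI allI impI)
    fix k assume "k < Suc i"
    then show "E ((v # xs) ! k) ((v # xs) ! Suc k)"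
      using xs \<open>E v u\<close> by (cases k; cases xs) auto
  qed (use xs in auto)
qed

lemma walk_to_SucE:
  assumes "walk_to E v S (Suc i)"
  obtains u where "E v u" "walk_to E u S i"
proof -
  obtain xs where xs: "length xs = Suc (Suc i)" "hd xs = v" "last xs \<in> S"
    "\<forall>k<Suc i. E (xs ! k) (xs ! Suc k)"
    using assms unfolding walk_to_def by blast
  then obtain ys where ys: "xs = v # ys"
    by (cases xs) auto
  have "E v (hd ys)"
    using xs(1,4) ys by (cases ys) auto
  moreover have "walk_to E (hd ys) S i"
    unfolding walk_to_def using xs ys by (intro exI[of _ ys]) (auto split: if_splits)
  ultimately show thesis by (rule that)
qed

lemma dist_eq_unique: "dist_eq E z S i \<Longrightarrow> dist_eq E z S j \<Longrightarrow> i = j"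
  using linorder_neqE_nat unfolding dist_eq_def by blast

lemma dist_eq_adjacent_le: "dist_eq E u S i \<Longrightarrow> dist_eq E v S j \<Longrightarrow> E v u \<Longrightarrow> j \<le> Suc i"
  unfolding dist_eq_def by (meson not_le walk_to_Suc)

lemma dist_eq_SucE:
  assumes "dist_eq E v S (Suc i)"
  obtains u where "E v u" "dist_eq E u S i"
proof -
  obtain u where u: "E v u" "walk_to E u S i"
    using assms walk_to_SucE unfolding dist_eq_def by metis
  have "\<not> walk_to E u S j" if "j < i" for j
  proof
    assume "walk_to E u S j"
    then have "walk_to E v S (Suc j)"
      using u(1) by (rule walk_to_Suc)
    with assms that show False
      unfolding dist_eq_def by auto
  qed
  then show thesis
    using that u unfolding dist_eq_def by blast
qed

lemma Nset_commute: "Nset V E y x = Nset V E x y"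
  unfolding Nset_def by (simp add: insert_commute)

locale S115_free_layering =
  fixes V :: "'a set" and E :: "'a \<Rightarrow> 'a \<Rightarrow> bool" and x y :: 'a
  assumes simple: "simple_graph V E"
    and S115_free: "H_free V E S115_V S115_E"
    and K4_free: "H_free V E K4_V K4_E"
    and diamond_free: "H_free V E diamond_V diamond_E"
    and butterfly_free: "H_free V E butterfly_V butterfly_E"
    and edge_xy: "E x y"
    and N2_independent: "\<forall>u\<in>Nset V E x y 2. \<forall>v\<in>Nset V E x y 2. \<not> E u v"
    and N3_one_N2_nbr: "\<forall>z\<in>Nset V E x y 3. card {w \<in> Nset V E x y 2. E z w} = 1"
    and no_N3_N4_N4_triangle: "\<not> (\<exists>t\<in>Nset V E x y 3. \<exists>u\<in>Nset V E x y 4.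
      \<exists>v\<in>Nset V E x y 4. E t u \<and> E t v \<and> E u v)"
begin

abbreviation N :: "nat \<Rightarrow> 'a set" where "N \<equiv> Nset V E x y"

lemmas no_K4 = K4_freeD[OF simple K4_free]
lemmas no_diamond = diamond_freeD[OF simple diamond_free]
lemmas no_butterfly = butterfly_freeD[OF simple butterfly_free]
lemmas no_S115 = S115_freeD[OF simple S115_free]

lemma sym: "E u v \<Longrightarrow> E v u"
  using simple unfolding simple_graph_def by blast

lemma nsym: "\<not> E v u \<Longrightarrow> \<not> E u v"
  using sym by blast

lemma irrefl: "\<not> E u u"
  using simple unfolding simple_graph_def by blast

lemma edge_in_V: "E u v \<Longrightarrow> u \<in> V"
  using simple unfolding simple_graph_def by blast

lemma layering_swap: "S115_free_layering V E y x"
  using simple S115_free K4_free diamond_free butterfly_free sym[OF edge_xy]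
    N2_independent N3_one_N2_nbr no_N3_N4_N4_triangle
  unfolding S115_free_layering_def Nset_commute[of V E y x] by (intro conjI)

lemma finite_N: "finite (N i)"
  using simple unfolding simple_graph_def Nset_def by simp

lemma N_unique: "z \<in> N i \<Longrightarrow> z \<in> N j \<Longrightarrow> i = j"
  using dist_eq_unique[of E z "{x, y}" i j] unfolding Nset_def by simp

lemma N_nonadj:
  assumes "u \<in> N i" "v \<in> N j" "Suc i < j \<or> Suc j < i"
  shows "\<not> E u v"
proof
  assume "E u v"
  then have "j \<le> Suc i" "i \<le> Suc j"
    using assms(1,2) dist_eq_adjacent_le[of E _ "{x, y}"] sym unfolding Nset_def by blast+
  with assms(3) show False
    by linarith
qed

lemma N_predE:
  assumes "v \<in> N j" "0 < j"
  obtains u where "u \<in> N (j - 1)" "E v u"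
proof -
  have "dist_eq E v {x, y} (Suc (j - 1))"
    using assms unfolding Nset_def by simp
  then obtain u where u: "E v u" "dist_eq E u {x, y} (j - 1)"
    by (rule dist_eq_SucE)
  moreover have "u \<in> V"
    using edge_in_V[OF sym[OF u(1)]] .
  ultimately show thesis
    using that unfolding Nset_def by simp
qed

lemma N0_iff: "z \<in> N 0 \<longleftrightarrow> z = x \<or> z = y"
  using edge_in_V[OF edge_xy] edge_in_V[OF sym[OF edge_xy]]
  unfolding Nset_def dist_eq_def by (auto simp: walk_to_0_iff)

lemma N1_iff: "z \<in> N 1 \<longleftrightarrow> z \<in> V \<and> z \<noteq> x \<and> z \<noteq> y \<and> (E z x \<or> E z y)"
proof
  assume z: "z \<in> N 1"
  then obtain u where "u \<in> N 0" "E z u"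
    by (rule N_predE) simp_all
  moreover have "z \<notin> N 0"
    using z N_unique[of z 0 1] by auto
  ultimately show "z \<in> V \<and> z \<noteq> x \<and> z \<noteq> y \<and> (E z x \<or> E z y)"
    using N0_iff edge_in_V by auto
next
  assume z: "z \<in> V \<and> z \<noteq> x \<and> z \<noteq> y \<and> (E z x \<or> E z y)"
  then have "walk_to E z {x, y} 1"
    using walk_to_Suc[of E x "{x, y}" 0 z] walk_to_Suc[of E y "{x, y}" 0 z]
    by (auto simp: walk_to_0_iff)
  then show "z \<in> N 1"
    using z unfolding Nset_def dist_eq_def by (auto simp: walk_to_0_iff)
qed

lemma N3_N2_nbr_unique:
  assumes "z \<in> N 3" "w \<in> N 2" "w' \<in> N 2" "E z w" "E z w'"
  shows "w = w'"
proof -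
  obtain a where "{w \<in> N 2. E z w} = {a}"
    using N3_one_N2_nbr assms(1) card_1_singletonE by blast
  then have "w \<in> {a}" "w' \<in> {a}"
    using assms by blast+
  then show ?thesis
    by simp
qed

lemma x_N0: "x \<in> N 0" and y_N0: "y \<in> N 0"
  using N0_iff by simp_all

end

locale ascending_path = S115_free_layering +
  fixes v u3 u t s :: 'a
  assumes v: "v \<in> Nset V E x y 2" and u3: "u3 \<in> Nset V E x y 3" and u: "u \<in> Nset V E x y 4"
    and t: "t \<in> Nset V E x y 5" and s: "s \<in> Nset V E x y 5"
    and v_u3: "E v u3" and u3_u: "E u3 u" and u_t: "E u t" and t_s: "E t s" and u_s: "\<not> E u s"
begin

(* Each S_{1,1,5} below is refuted uniformly: every required edge or non-edge is a proof-local
   fact, its mirror image, or a non-edge between layers at distance at least two (N_nonadj).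
   The argument-free fact method sees only proof-local facts, hence the notes of path_facts. *)
lemmas path_facts = v u3 u t s v_u3 u3_u u_t t_s u_s

lemma ascending_path_swap: "ascending_path V E y x v u3 u t s"
  using path_facts
  by (intro ascending_path.intro layering_swap ascending_path_axioms.intro)
    (simp_all add: Nset_commute[of V E y x])

lemma N1_nbr_of_v_N2_nbr_eq:
  assumes z: "z \<in> N 1" "E z v" and w: "w \<in> N 2" "E z w"
  shows "w = v"
proof (rule ccontr)
  assume "w \<noteq> v"
  note path_facts
  obtain z0 where "z0 \<in> N 0" "E z z0"
    using N_predE[OF z(1)] by force
  have "\<not> E w v"
    using N2_independent v w(1) by blast
  have "\<not> E w u3"
    using N3_N2_nbr_unique[OF u3 v w(1)] sym v_u3 w(2) \<open>w \<noteq> v\<close> by blast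
  have "z0 \<noteq> w"
    using N_unique \<open>z0 \<in> N 0\<close> w(1) by fastforce
  show False
    by (rule no_S115[of z z0 w v u3 u t s];
        (fact | (rule sym, fact) | (rule nsym, fact) | (rule N_nonadj, fact, fact, simp)))
qed

abbreviation N1_away :: "'a set" where "N1_away \<equiv> {z \<in> N 1. \<not> E z v}"

lemma N2_nbr_in_N1_away:
  assumes "w \<in> N 2" "w \<noteq> v"
  shows "\<exists>z\<in>N1_away. E w z"
proof -
  obtain z where "z \<in> N 1" "E w z"
    using N_predE[OF assms(1)] by force
  moreover have "\<not> E z v"
    using N1_nbr_of_v_N2_nbr_eq[OF \<open>z \<in> N 1\<close> _ assms(1)] sym calculation(2) assms(2) by blast
  ultimately show ?thesis
    by blast
qed

lemma card_N2_le_card_N1_away: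
  assumes "\<And>z w w'. z \<in> N1_away \<Longrightarrow> w \<in> N 2 \<Longrightarrow> w' \<in> N 2 \<Longrightarrow> E z w \<Longrightarrow> E z w' \<Longrightarrow> w = w'"
  shows "card (N 2 - {v}) \<le> card N1_away"
  by (rule card_le_card_if_private_witnesses[where R = E])
    (use assms finite_N N2_nbr_in_N1_away sym in auto)

end

locale ascending_path_x_private = ascending_path +
  fixes p :: 'a
  assumes p: "p \<in> Nset V E x y 1" and p_x: "E p x" and p_y: "\<not> E p y" and p_v: "E p v"
begin

lemma N1_away_y_side:
  assumes z: "z \<in> N1_away" "\<not> E z x"
  shows "E z y" and "\<not> E z p"
proof -
  have "z \<in> N 1" "\<not> E z v"
    using z(1) by simp_all
  then show "E z y"
    using z(2) N1_iff by blast
  show "\<not> E z p"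
  proof
    assume "E z p"
    note path_facts x_N0 p p_x p_v
    have "x \<noteq> z"
      using N_unique x_N0 \<open>z \<in> N 1\<close> by fastforce
    show False
      by (rule no_S115[of p x z v u3 u t s];
          (fact | (rule sym, fact) | (rule nsym, fact) | (rule N_nonadj, fact, fact, simp)))
  qed
qed

lemma N1_away_x_side:
  assumes z: "z \<in> N1_away" "E z x"
  shows "E z y \<or> E z p"
proof (rule ccontr)
  assume "\<not> (E z y \<or> E z p)"
  then have "\<not> E z y" "\<not> E z p"
    by simp_all
  have "z \<in> N 1" "\<not> E z v"
    using z(1) by simp_all
  note path_facts x_N0 y_N0 p p_x p_y p_v edge_xy
  have "y \<noteq> z"
    using N_unique y_N0 \<open>z \<in> N 1\<close> by fastforce
  show False
    by (rule no_S115[of x y z p v u3 u t];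
        (fact | (rule sym, fact) | (rule nsym, fact) | (rule N_nonadj, fact, fact, simp)))
qed

lemma N1_away_N2_nbr_unique:
  assumes z: "z \<in> N1_away" and w: "w \<in> N 2" "w' \<in> N 2" "E z w" "E z w'"
  shows "w = w'"
proof (rule ccontr)
  assume "w \<noteq> w'"
  have "z \<in> N 1" "\<not> E z v"
    using z by simp_all
  note path_facts x_N0 y_N0 p p_x p_y p_v edge_xy
  have "w \<noteq> v" "w' \<noteq> v"
    using \<open>\<not> E z v\<close> w(3,4) by blast+
  have "\<not> E w p" "\<not> E w' p"
    using N1_nbr_of_v_N2_nbr_eq[OF p p_v] w \<open>w \<noteq> v\<close> \<open>w' \<noteq> v\<close> sym by blast+
  have "\<not> E w u3" "\<not> E w' u3"
    using N3_N2_nbr_unique[OF u3 v] w(1,2) v_u3 sym \<open>w \<noteq> v\<close> \<open>w' \<noteq> v\<close> by blast+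
  have "\<not> E w w'" "\<not> E w v" "\<not> E w' v"
    using N2_independent v w(1,2) by blast+
  consider "E z x" "E z p" | "E z x" "\<not> E z p" "E z y" | "\<not> E z x" "E z y" "\<not> E z p"
    using N1_away_x_side N1_away_y_side z by blast
  then show False
  proof cases
    case 1
    show False
      by (rule no_S115[of z w w' p v u3 u t];
          (fact | (rule sym, fact) | (rule nsym, fact) | (rule N_nonadj, fact, fact, simp)))
  next
    case 2
    show False
      by (rule no_S115[of z w w' x p v u3 u];
          (fact | (rule sym, fact) | (rule nsym, fact) | (rule N_nonadj, fact, fact, simp)))
  next
    case 3
    show False
      by (rule no_S115[of z w w' y x p v u3];
          (fact | (rule sym, fact) | (rule nsym, fact) | (rule N_nonadj, fact, fact, simp)))
  qed
qed

lemma N1_away_x_side_agree_on_p: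
  assumes z1: "z1 \<in> N1_away" "E z1 x" "E z1 p" and z2: "z2 \<in> N1_away" "E z2 x"
  shows "E z2 p"
proof (rule ccontr)
  assume "\<not> E z2 p"
  then have "E z2 y"
    using N1_away_x_side z2 by blast
  have "y \<noteq> p" "y \<noteq> z1"
    using N_unique y_N0 p z1(1) by fastforce+
  then have "\<not> E z1 y"
    using no_diamond[of x z1 y p] z1(2,3) sym p_x p_y edge_xy by blast
  moreover have "\<not> E z1 z2"
    using no_diamond[of x z2 y z1] z2(2) \<open>E z2 y\<close> sym z1(2) calculation edge_xy \<open>y \<noteq> z1\<close>
    by blast
  ultimately show False
    using no_butterfly[of p z1 y z2 x] z1(3) \<open>\<not> E z2 p\<close> \<open>E z2 y\<close> sym p_x p_y z1(2) z2(2) edge_xy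
    by blast
qed

lemma card_N1_away_x_side_le_1: "card {z \<in> N1_away. E z x} \<le> 1"
proof -
  have "z1 = z2" if z1: "z1 \<in> N1_away" "E z1 x" and z2: "z2 \<in> N1_away" "E z2 x" for z1 z2
  proof (rule ccontr)
    assume "z1 \<noteq> z2"
    consider "E z1 p" "E z2 p" | "E z1 p \<noteq> E z2 p" | "\<not> E z1 p" "\<not> E z2 p" "E z1 y" "E z2 y"
      using N1_away_x_side z1 z2 by blast
    then show False
    proof cases
      case 1
      then show False
        using no_K4[of x p z1 z2] no_diamond[of x p z1 z2] sym p_x z1(2) z2(2) \<open>z1 \<noteq> z2\<close> by blast
    next
      case 2
      then show False
        using N1_away_x_side_agree_on_p z1 z2 by blast
    next
      case 3
      then show False
        using no_K4[of x y z1 z2] no_diamond[of x y z1 z2] sym edge_xy z1(2) z2(2) \<open>z1 \<noteq> z2\<close> by blast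
    qed
  qed
  then show ?thesis
    using card_le_Suc0_iff_eq[of "{z \<in> N1_away. E z x}"] finite_N by auto
qed

lemma card_N1_away_y_side_le_2: "card {z \<in> N1_away. \<not> E z x} \<le> 2"
proof (rule card_le_2_if_no_three)
  show "finite {z \<in> N1_away. \<not> E z x}"
    using finite_N by simp
  have adj: "E z1 z2" if z1: "z1 \<in> N1_away" "\<not> E z1 x" and z2: "z2 \<in> N1_away" "\<not> E z2 x"
    and "z1 \<noteq> z2" for z1 z2
  proof (rule ccontr)
    assume "\<not> E z1 z2"
    have "z1 \<in> N 1" "\<not> E z1 v" "z2 \<in> N 1" "\<not> E z2 v"
      using z1 z2 by simp_all
    have "E z1 y" "\<not> E z1 p" "E z2 y" "\<not> E z2 p"
      using N1_away_y_side z1 z2 by blast+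
    note path_facts x_N0 y_N0 p p_x p_y p_v edge_xy
    show False
      by (rule no_S115[of y z1 z2 x p v u3 u];
          (fact | (rule sym, fact) | (rule nsym, fact) | (rule N_nonadj, fact, fact, simp)))
  qed
  fix z1 z2 z3
  assume "z1 \<in> {z \<in> N1_away. \<not> E z x}" "z2 \<in> {z \<in> N1_away. \<not> E z x}"
    "z3 \<in> {z \<in> N1_away. \<not> E z x}" "z1 \<noteq> z2" "z1 \<noteq> z3" "z2 \<noteq> z3"
  then have "E y z1" "E y z2" "E y z3" "E z1 z2" "E z1 z3" "E z2 z3"
    using adj N1_away_y_side(1)[THEN sym] by blast+
  then show False
    by (rule no_K4)
qed

lemma card_N1_away_le_3: "card N1_away \<le> 3"
proof -
  have "card N1_away = card ({z \<in> N1_away. E z x} \<union> {z \<in> N1_away. \<not> E z x})"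
    by (rule arg_cong[where f = card]) blast
  also have "\<dots> \<le> card {z \<in> N1_away. E z x} + card {z \<in> N1_away. \<not> E z x}"
    by (rule card_Un_le)
  also have "\<dots> \<le> 1 + 2"
    using card_N1_away_x_side_le_1 card_N1_away_y_side_le_2 by (rule add_mono)
  finally show ?thesis
    by simp
qed


lemma card_N2_minus_v_le_3: "card (N 2 - {v}) \<le> 3"
proof -
  have "card (N 2 - {v}) \<le> card N1_away"
    by (blast intro: card_N2_le_card_N1_away N1_away_N2_nbr_unique)
  then show ?thesis
    using card_N1_away_le_3 by linarith
qed
end

locale ascending_path_common = ascending_path +
  fixes c :: 'a
  assumes c: "c \<in> Nset V E x y 1" and c_v: "E c v"
    and N1_nbrs_of_v_common: "\<And>z. z \<in> Nset V E x y 1 \<Longrightarrow> E z v \<Longrightarrow> E z x \<and> E z y"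
begin

lemma ascending_path_common_swap: "ascending_path_common V E y x v u3 u t s c"
  using c c_v N1_nbrs_of_v_common
  by (intro ascending_path_common.intro ascending_path_swap ascending_path_common_axioms.intro)
    (auto simp: Nset_commute[of V E y x])

lemma c_x: "E c x" and c_y: "E c y"
  using N1_nbrs_of_v_common[OF c c_v] by simp_all

lemma x_only_nonadj:
  assumes q: "q \<in> N 1" "E q x" "\<not> E q y"
  shows "\<not> E q v" and "\<not> E q c"
proof -
  show "\<not> E q v"
    using N1_nbrs_of_v_common q by blast
  have "y \<noteq> q"
    using N_unique y_N0 q(1) by fastforce
  then show "\<not> E q c"
    using no_diamond[of x c y q] c_x c_y q(2,3) edge_xy sym by blast
qed

lemma x_only_unique:
  assumes q1: "q1 \<in> N 1" "E q1 x" "\<not> E q1 y" and q2: "q2 \<in> N 1" "E q2 x" "\<not> E q2 y"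
  shows "q1 = q2"
proof (rule ccontr)
  assume "q1 \<noteq> q2"
  have "\<not> E q1 v" "\<not> E q1 c" "\<not> E q2 v" "\<not> E q2 c"
    using x_only_nonadj q1 q2 by blast+
  show False
  proof (cases "E q1 q2")
    case True
    then show False
      using no_butterfly[of q1 q2 y c x] q1 q2 c_y edge_xy c_x sym
        \<open>\<not> E q1 c\<close> \<open>\<not> E q2 c\<close> by blast
  next
    case False
    note path_facts x_N0 c c_x c_v
    show False
      by (rule no_S115[of x q1 q2 c v u3 u t];
          (fact | (rule sym, fact) | (rule nsym, fact) | (rule N_nonadj, fact, fact, simp)))
  qed
qed

lemma x_only_N2_nbr_unique:
  assumes q: "q \<in> N 1" "E q x" "\<not> E q y" and w: "w \<in> N 2" "E q w" and w': "w' \<in> N 2" "E q w'"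
  shows "w = w'"
proof (rule ccontr)
  assume "w \<noteq> w'"
  have "\<not> E q v" "\<not> E q c"
    using x_only_nonadj q by blast+
  then have "w \<noteq> v" "w' \<noteq> v"
    using w(2) w'(2) by blast+
  have "\<not> E w c" "\<not> E w' c"
    using N1_nbr_of_v_N2_nbr_eq[OF c c_v] w w' \<open>w \<noteq> v\<close> \<open>w' \<noteq> v\<close> sym by blast+
  have "\<not> E w u3" "\<not> E w' u3"
    using N3_N2_nbr_unique[OF u3 v] w(1) w'(1) v_u3 sym \<open>w \<noteq> v\<close> \<open>w' \<noteq> v\<close> by blast+
  have "\<not> E w w'" "\<not> E w v" "\<not> E w' v"
    using N2_independent v w(1) w'(1) by blast+
  note path_facts x_N0 c c_x c_v
  show False
    by (rule no_S115[of q w w' x c v u3 u];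
        (fact | (rule sym, fact) | (rule nsym, fact) | (rule N_nonadj, fact, fact, simp)))
qed

lemma N1_away_one_sided:
  assumes "z \<in> N1_away"
  shows "\<not> (E z x \<and> E z y)"
proof
  assume "E z x \<and> E z y"
  moreover have "z \<noteq> c"
    using assms c_v by blast
  ultimately show False
    using no_K4[of x y z c] no_diamond[of x y z c] edge_xy c_x c_y sym by blast
qed

lemma N1_away_N2_nbr_unique:
  assumes z: "z \<in> N1_away" and w: "w \<in> N 2" "w' \<in> N 2" "E z w" "E z w'"
  shows "w = w'"
proof -
  interpret swapped: ascending_path_common V E y x v u3 u t s c
    by (rule ascending_path_common_swap)
  have "(E z x \<and> \<not> E z y) \<or> (E z y \<and> \<not> E z x)"
    using N1_away_one_sided z N1_iff by blast
  then show ?thesis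
    using x_only_N2_nbr_unique swapped.x_only_N2_nbr_unique z w
    unfolding Nset_commute[of V E y x] by blast
qed

lemma card_N1_away_le_2: "card N1_away \<le> 2"
proof -
  interpret swapped: ascending_path_common V E y x v u3 u t s c
    by (rule ascending_path_common_swap)
  let ?X = "{z \<in> N 1. E z x \<and> \<not> E z y}" and ?Y = "{z \<in> N 1. E z y \<and> \<not> E z x}"
  have "card ?X \<le> 1" "card ?Y \<le> 1"
    using x_only_unique swapped.x_only_unique finite_N
    unfolding Nset_commute[of V E y x] by (auto simp: card_le_Suc0_iff_eq)
  moreover have "N1_away \<subseteq> ?X \<union> ?Y"
    using N1_away_one_sided N1_iff by blast
  then have "card N1_away \<le> card (?X \<union> ?Y)"
    using finite_N by (intro card_mono) auto
  ultimately show ?thesis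
    using card_Un_le[of ?X ?Y] by linarith
qed


lemma card_N2_minus_v_le_2: "card (N 2 - {v}) \<le> 2"
proof -
  have "card (N 2 - {v}) \<le> card N1_away"
    by (blast intro: card_N2_le_card_N1_away N1_away_N2_nbr_unique)
  then show ?thesis
    using card_N1_away_le_2 by linarith
qed
end

context ascending_path
begin

lemma card_N2_le_4: "card (N 2) \<le> 4"
proof -
  obtain c where c: "c \<in> N 1" "E v c"
    using N_predE[OF v] by force
  consider (x_private) p where "p \<in> N 1" "E p x" "\<not> E p y" "E p v"
    | (y_private) p where "p \<in> N 1" "E p y" "\<not> E p x" "E p v"
    | (common) "\<And>z. z \<in> N 1 \<Longrightarrow> E z v \<Longrightarrow> E z x \<and> E z y"
    using N1_iff by blast
  then have "card (N 2 - {v}) \<le> 3"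
  proof cases
    case (x_private p)
    then interpret ascending_path_x_private V E x y v u3 u t s p
      by (intro ascending_path_x_private.intro ascending_path_x_private_axioms.intro
          ascending_path.intro S115_free_layering_axioms ascending_path_axioms)
    show ?thesis
      by (rule card_N2_minus_v_le_3)
  next
    case (y_private p)
    then interpret swapped: ascending_path_x_private V E y x v u3 u t s p
      by (intro ascending_path_x_private.intro ascending_path_swap
          ascending_path_x_private_axioms.intro) (simp_all add: Nset_commute[of V E y x])
    show ?thesis
      using swapped.card_N2_minus_v_le_3 unfolding Nset_commute[of V E y x] .
  next
    case common
    then interpret ascending_path_common V E x y v u3 u t s c
      using c sym by (intro ascending_path_common.intro ascending_path_common_axioms.intro
          ascending_path.intro S115_free_layering_axioms ascending_path_axioms) auto
    show ?thesis
      using card_N2_minus_v_le_2 by linarith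
  qed
  then show ?thesis
    using v finite_N by (simp add: card_Diff_singleton)
qed

end

context S115_free_layering
begin

lemma no_induced_path_N4_N5_N5:
  assumes card: "5 \<le> card (N 2)"
    and u: "u \<in> N 4" and t: "t \<in> N 5" "E u t" and s: "s \<in> N 5" "E t s" "\<not> E u s"
  shows False
proof -
  obtain u3 where u3: "u3 \<in> N 3" "E u u3"
    using N_predE[OF u] by force
  obtain v where v: "v \<in> N 2" "E u3 v"
    using N_predE[OF u3(1)] by force
  interpret ascending_path V E x y v u3 u t s
    using u t s u3 v sym by unfold_locales auto
  show False
    using card_N2_le_4 card by linarith
qed

lemma no_induced_path_N5_N5:
  assumes card: "5 \<le> card (N 2)"
    and a: "a \<in> N 5" and b: "b \<in> N 5" and c: "c \<in> N 4 \<union> N 5"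
    and ab: "E a b" and bc: "E b c" and "\<not> E a c" "a \<noteq> c"
  shows False
proof (cases "c \<in> N 4")
  case True
  then show False
    using no_induced_path_N4_N5_N5[OF card True b _ a] sym ab bc \<open>\<not> E a c\<close> by blast
next
  case False
  then have "c \<in> N 5"
    using c by blast
  obtain b4 where b4: "b4 \<in> N 4" "E b b4"
    using N_predE[OF b] by force
  consider "E b4 a" "E b4 c" | "E b4 a" "\<not> E b4 c" | "\<not> E b4 a" "E b4 c" | "\<not> E b4 a" "\<not> E b4 c"
    by blast
  then show False
  proof cases
    case 1
    then show False
      using no_diamond[of b b4 a c] b4(2) ab bc sym \<open>\<not> E a c\<close> \<open>a \<noteq> c\<close> by blast
  next
    case 2
    then show False
      using no_induced_path_N4_N5_N5[OF card b4(1) b _ \<open>c \<in> N 5\<close> bc] b4(2) sym by blast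
  next
    case 3
    then show False
      using no_induced_path_N4_N5_N5[OF card b4(1) b _ a] b4(2) ab sym by blast
  next
    case 4
    obtain b3 where "b3 \<in> N 3" "E b4 b3"
      using N_predE[OF b4(1)] by force
    obtain b2 where "b2 \<in> N 2" "E b3 b2"
      using N_predE[OF \<open>b3 \<in> N 3\<close>] by force
    obtain b1 where "b1 \<in> N 1" "E b2 b1"
      using N_predE[OF \<open>b2 \<in> N 2\<close>] by force
    obtain b0 where "b0 \<in> N 0" "E b1 b0"
      using N_predE[OF \<open>b1 \<in> N 1\<close>] by force
    note a b b4 ab bc
    show False
      by (rule no_S115[of b a c b4 b3 b2 b1 b0];
          (fact | (rule sym, fact) | (rule nsym, fact) | (rule N_nonadj, fact, fact, simp)))
  qed
qed

lemma no_S115_centred_in_N4: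
  assumes a: "a \<in> N 5" and b: "b \<in> N 4" and c: "c \<in> N 4 \<union> N 5"
    and ab: "E a b" and bc: "E b c" and "\<not> E a c" "a \<noteq> c"
    and b3: "b3 \<in> N 3" "E b b3" and b2: "b2 \<in> N 2" "E b3 b2"
    and "q \<in> N 1" "E b2 q" "q' \<in> N 0" "E q q'"
    and "q'' \<in> N j" "E q' q''" "\<not> E q q''" "\<not> E b2 q''" and j_le: "j \<le> 1"
  shows False
proof -
  have "\<not> E c b3"
  proof
    assume "E c b3"
    show False
    proof (cases "c \<in> N 4")
      case True
      then show False
        using no_N3_N4_N4_triangle b3 b bc sym \<open>E c b3\<close> by blast
    next
      case False
      then show False
        using c N_nonadj[of c 5 b3 3] b3(1) \<open>E c b3\<close> by simp
    qed
  qed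
  have c_far: "\<not> E c w" if "w \<in> N i" "i \<le> 2" for w i
    using c N_nonadj[of c 4 w i] N_nonadj[of c 5 w i] that by auto
  show False
    by (rule no_S115[of b a c b3 b2 q q' q''];
        (fact | (rule sym, fact) | (rule nsym, fact) | (rule N_nonadj, fact, fact, use j_le in arith)
          | (rule c_far, fact, use j_le in arith) | (rule nsym, rule c_far, fact, use j_le in arith)))
qed

lemma no_induced_path_N5_N4:
  assumes a: "a \<in> N 5" and b: "b \<in> N 4" and c: "c \<in> N 4 \<union> N 5"
    and ab: "E a b" and bc: "E b c" and "\<not> E a c" "a \<noteq> c"
    and r: "r \<in> N 1" "E r x" "\<not> E r y"
  shows False
proof -
  obtain b3 where b3: "b3 \<in> N 3" "E b b3"
    using N_predE[OF b] by force
  obtain b2 where b2: "b2 \<in> N 2" "E b3 b2"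
    using N_predE[OF b3(1)] by force
  note tail = no_S115_centred_in_N4[OF a b c ab bc \<open>\<not> E a c\<close> \<open>a \<noteq> c\<close> b3 b2]
  have "\<not> E b2 x" "\<not> E b2 y"
    using N_nonadj[of b2 2 _ 0] b2(1) x_N0 y_N0 by simp_all
  obtain z where z: "z \<in> N 1" "E b2 z"
    using N_predE[OF b2(1)] by force
  consider "E z x" "\<not> E z y" | "E z y" "\<not> E z x" | "E z x" "E z y"
    using z(1) N1_iff by blast
  then show False
  proof cases
    case 1
    then show False
      using tail[OF z x_N0 _ y_N0 edge_xy] \<open>\<not> E b2 y\<close> by simp
  next
    case 2
    then show False
      using tail[OF z y_N0 _ x_N0 sym[OF edge_xy]] \<open>\<not> E b2 x\<close> by simp
  next
    case 3
    show False
    proof (cases "E b2 r")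
      case True
      then show False
        using tail[OF r(1) True x_N0 r(2) y_N0 edge_xy r(3)] \<open>\<not> E b2 y\<close> by simp
    next
      case False
      have "y \<noteq> r"
        using N_unique y_N0 r(1) by fastforce
      then have "\<not> E z r"
        using no_diamond[of x z y r] 3 r edge_xy sym by blast
      then show False
        using tail[OF z x_N0 _ r(1) sym[OF r(2)]] 3 False by simp
    qed
  qed
qed

lemma no_induced_path_from_N5:
  assumes card: "5 \<le> card (N 2)" and r: "r \<in> N 1" "E r x" "\<not> E r y"
    and "a \<in> N 5" "b \<in> N 4 \<union> N 5" "c \<in> N 4 \<union> N 5" "E a b" "E b c" "\<not> E a c" "a \<noteq> c"
  shows False
  using assms(5-) no_induced_path_N5_N4[OF _ _ _ _ _ _ _ r] no_induced_path_N5_N5[OF card] by blast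

end

theorem lemma29:
  fixes V :: "'a set" and E :: "'a \<Rightarrow> 'a \<Rightarrow> bool" and x y r :: 'a
  assumes "simple_graph V E"
    and "H_free V E S115_V S115_E"
    and "H_free V E K4_V K4_E"
    and "H_free V E diamond_V diamond_E"
    and "H_free V E butterfly_V butterfly_E"
    and "E x y"
    and "r \<noteq> y" and "E r x" and "\<not> E r y"
    and "\<forall>u\<in>Nset V E x y 2. \<forall>v\<in>Nset V E x y 2. \<not> E u v"
    and "\<forall>z\<in>Nset V E x y 3. card {w \<in> Nset V E x y 2. E z w} = 1"
    and "\<not> (\<exists>t\<in>Nset V E x y 3. \<exists>u\<in>Nset V E x y 4. \<exists>v\<in>Nset V E x y 4.
              E t u \<and> E t v \<and> E u v)"
    and "card (Nset V E x y 2) \<ge> 5"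
    and "Nset V E x y 5 \<noteq> {}"
  shows "\<not> (\<exists>a b c. {a, b, c} \<subseteq> Nset V E x y 4 \<union> Nset V E x y 5 \<and>
              E a b \<and> E b c \<and> \<not> E a c \<and> a \<noteq> c \<and>
              (a \<in> Nset V E x y 5 \<or> c \<in> Nset V E x y 5))"
proof
  interpret S115_free_layering V E x y
    by (rule S115_free_layering.intro) (fact assms)+
  have r: "r \<in> N 1"
    using assms(7-9) N1_iff edge_in_V irrefl by blast
  assume "\<exists>a b c. {a, b, c} \<subseteq> N 4 \<union> N 5 \<and> E a b \<and> E b c \<and> \<not> E a c \<and> a \<noteq> c \<and>
    (a \<in> N 5 \<or> c \<in> N 5)"
  then obtain a b c where "{a, b, c} \<subseteq> N 4 \<union> N 5" "E a b" "E b c" "\<not> E a c" "a \<noteq> c"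
    "a \<in> N 5 \<or> c \<in> N 5"
    by blast
  then show False
    using no_induced_path_from_N5[OF assms(13) r assms(8,9), of a b c]
      no_induced_path_from_N5[OF assms(13) r assms(8,9), of c b a] sym by auto
qed

end
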